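(* Let $(\mathcal{H}, p_0, \mathcal{Z}, T, \mathcal{Y}, O)$ be a learning POMDP, let $h^* \in \mathcal{H}$ be a target hypothesis, let $0<\lambda\le 1$ be a teaching performance and let $t^*\in\mathbb{N}_{\ge 1}$ be a pre-set number of trials. Suppose there exist a polynomial $B\in\mathcal{R}[t,b]$ of degree $d$, a sum-of-squares polynomial $p^f\in\Sigma[b]$, and constants $s_1,s_2>0$ such that (i) $B(t^*,b)+p^f(b)\big(b(h^* )-\lambda\big)-s_1\in\Sigma[b]$; (ii) $-B(0,p_0)-s_2>0$; (iii) for all $t\in\{1,\dots,t^*\}$, $y\in\mathcal{Y}$, $z\in\mathcal{Z}$: $$-R_z(b,y)^d\Big(B\Big(t,\tfrac{S_z(b,y)}{R_z(b,y)}\Big)-B(t-1,b)\Big)\in\Sigma[t,b].$$ Then there exists no solution of the belief dynamics $b_t=f_{z}(b_{t-1},y_t)$ (with arbitrary examples $z\in\mathcal{Z}$ and observations $y_t\in\mathcal{Y}$) with $b_0=p_0$ and $b_{t^*}\in\mathcal{B}_f$, where $\mathcal{B}_f=\{b\in\mathcal{B}: b(h^* )<\lambda\}$; hence the teaching performance is satisfied, i.e. $b_{t^*}(h^* )\ge\lambda$ along all such trajectories.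
   Context: A learning POMDP is a tuple $(\mathcal{H}, p_0, \mathcal{Z}, T, \mathcal{Y}, O)$ where $\mathcal{H}$ is a finite set of hypotheses, $\mathcal{Z}$ a finite set of examples (actions), $\mathcal{Y}$ a finite set of observations, $p_0$ an initial distribution on $\mathcal{H}$, $T(h,z,h')\in[0,1]$ transition probabilities and $O(y\mid h',z)\in[0,1]$ observation probabilities. $\mathcal{B}$ is the unit simplex of beliefs on $\mathcal{H}$; $b=(b(h))_{h\in\mathcal{H}}$ are treated as real variables. The belief update $f_z(b,y)$ is the rational map with components $f_z^{h'}(b,y)=S_z^{h'}(b,y)/R_z(b,y)$, where $S_z^{h'}(b,y)=O(y\mid h',z)\sum_{h\in\mathcal{H}}T(h,z,h')b(h)$ and $R_z(b,y)=\sum_{h''\in\mathcal{H}}O(y\mid h'',z)\sum_{h\in\mathcal{H}}T(h,z,h'')b(h)$; $S_z/R_z$ denotes the vector with these components. $\mathcal{R}[x]$ denotes real polynomials in the variables $x$, and $\Sigma[x]\subset\mathcal{R}[x]$ the polynomials that are sums of squares of polynomials. *)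

theory Defs
  imports Complex_Main
begin

definition monomial_val :: "('v::finite \<Rightarrow> nat) \<Rightarrow> ('v \<Rightarrow> real) \<Rightarrow> real" where
  "monomial_val \<alpha> x = (\<Prod>v\<in>UNIV. x v ^ \<alpha> v)"

definition mdeg :: "('v::finite \<Rightarrow> nat) \<Rightarrow> nat" where
  "mdeg \<alpha> = (\<Sum>v\<in>UNIV. \<alpha> v)"

definition poly_fun_deg_le :: "(('v::finite \<Rightarrow> real) \<Rightarrow> real) \<Rightarrow> nat \<Rightarrow> bool" where
  "poly_fun_deg_le f d \<longleftrightarrow>
     (\<exists>c :: ('v \<Rightarrow> nat) \<Rightarrow> real.
        finite {\<alpha>. c \<alpha> \<noteq> 0} \<and> (\<forall>\<alpha>. c \<alpha> \<noteq> 0 \<longrightarrow> mdeg \<alpha> \<le> d) \<and>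
        f = (\<lambda>x. \<Sum>\<alpha>\<in>{\<alpha>. c \<alpha> \<noteq> 0}. c \<alpha> * monomial_val \<alpha> x))"

definition poly_fun :: "(('v::finite \<Rightarrow> real) \<Rightarrow> real) \<Rightarrow> bool" where
  "poly_fun f \<longleftrightarrow> (\<exists>d. poly_fun_deg_le f d)"

definition poly_fun_degree :: "(('v::finite \<Rightarrow> real) \<Rightarrow> real) \<Rightarrow> nat \<Rightarrow> bool" where
  "poly_fun_degree f d \<longleftrightarrow> poly_fun_deg_le f d \<and> (\<forall>d'<d. \<not> poly_fun_deg_le f d')"

definition sos_fun :: "(('v::finite \<Rightarrow> real) \<Rightarrow> real) \<Rightarrow> bool" where
  "sos_fun f \<longleftrightarrow> (\<exists>qs. (\<forall>q\<in>set qs. poly_fun q) \<and> f = (\<lambda>x. \<Sum>q\<leftarrow>qs. (q x)\<^sup>2))"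

text \<open>Functions of (t,b): the variable None is t, Some h is b(h).\<close>
definition tb_fun :: "(real \<Rightarrow> ('h \<Rightarrow> real) \<Rightarrow> real) \<Rightarrow> ('h option \<Rightarrow> real) \<Rightarrow> real" where
  "tb_fun B x = B (x None) (\<lambda>h. x (Some h))"

definition belief_simplex :: "('h::finite \<Rightarrow> real) set" where
  "belief_simplex = {b. (\<forall>h. 0 \<le> b h) \<and> (\<Sum>h\<in>UNIV. b h) = 1}"

definition learning_pomdp ::
  "('h::finite \<Rightarrow> real) \<Rightarrow> ('h \<Rightarrow> 'z::finite \<Rightarrow> 'h \<Rightarrow> real) \<Rightarrow> ('y::finite \<Rightarrow> 'h \<Rightarrow> 'z \<Rightarrow> real) \<Rightarrow> bool" where
  "learning_pomdp p0 T Obs \<longleftrightarrow>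
     p0 \<in> belief_simplex \<and>
     (\<forall>h z h'. 0 \<le> T h z h' \<and> T h z h' \<le> 1) \<and>
     (\<forall>h z. (\<Sum>h'\<in>UNIV. T h z h') = 1) \<and>
     (\<forall>y h' z. 0 \<le> Obs y h' z \<and> Obs y h' z \<le> 1) \<and>
     (\<forall>h' z. (\<Sum>y\<in>UNIV. Obs y h' z) = 1)"

text \<open>S_z^{h'}(b,y) and R_z(b,y); Obs y h' z stands for O(y | h', z).\<close>
definition S_upd :: "('h::finite \<Rightarrow> 'z \<Rightarrow> 'h \<Rightarrow> real) \<Rightarrow> ('y \<Rightarrow> 'h \<Rightarrow> 'z \<Rightarrow> real)
    \<Rightarrow> 'z \<Rightarrow> ('h \<Rightarrow> real) \<Rightarrow> 'y \<Rightarrow> 'h \<Rightarrow> real" where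
  "S_upd T Obs z b y h' = Obs y h' z * (\<Sum>h\<in>UNIV. T h z h' * b h)"

definition R_upd :: "('h::finite \<Rightarrow> 'z \<Rightarrow> 'h \<Rightarrow> real) \<Rightarrow> ('y \<Rightarrow> 'h \<Rightarrow> 'z \<Rightarrow> real)
    \<Rightarrow> 'z \<Rightarrow> ('h \<Rightarrow> real) \<Rightarrow> 'y \<Rightarrow> real" where
  "R_upd T Obs z b y = (\<Sum>h''\<in>UNIV. Obs y h'' z * (\<Sum>h\<in>UNIV. T h z h'' * b h))"

definition f_upd :: "('h::finite \<Rightarrow> 'z \<Rightarrow> 'h \<Rightarrow> real) \<Rightarrow> ('y \<Rightarrow> 'h \<Rightarrow> 'z \<Rightarrow> real)
    \<Rightarrow> 'z \<Rightarrow> ('h \<Rightarrow> real) \<Rightarrow> 'y \<Rightarrow> 'h \<Rightarrow> real" where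
  "f_upd T Obs z b y = (\<lambda>h'. S_upd T Obs z b y h' / R_upd T Obs z b y)"

definition fail_set :: "'h::finite \<Rightarrow> real \<Rightarrow> ('h \<Rightarrow> real) set" where
  "fail_set hstar lam = {b \<in> belief_simplex. b hstar < lam}"

end

theory Submission
  imports Defs
begin

text \<open>The barrier B(t, b_t) is negative at t = 0 by (ii) and, by (iii), cannot increase
  along a trajectory: beliefs stay nonnegative, so R_z(b,y) > 0 where it is nonzero, and the sum of squares
  -R^d (B(t, f_z(b,y)) - B(t-1, b)) forces the increment to be nonpositive. Hence
  B(t*, b_t*) < 0, and then (i) together with s1 > 0 and pf \<ge> 0 leaves b_t*(h*) \<ge> \<lambda>
  as the only possibility. Condition (iii) is assumed as an identity of functions.\<close>

definition belief_trajectory ::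
  "('h::finite \<Rightarrow> 'z \<Rightarrow> 'h \<Rightarrow> real) \<Rightarrow> ('y \<Rightarrow> 'h \<Rightarrow> 'z \<Rightarrow> real) \<Rightarrow> ('h \<Rightarrow> real) \<Rightarrow>
    (nat \<Rightarrow> 'z) \<Rightarrow> (nat \<Rightarrow> 'y) \<Rightarrow> nat \<Rightarrow> (nat \<Rightarrow> 'h \<Rightarrow> real) \<Rightarrow> bool" where
  "belief_trajectory T Obs p0 zs ys n b \<longleftrightarrow>
     b 0 = p0 \<and>
     (\<forall>t\<in>{1..n}. R_upd T Obs (zs t) (b (t - 1)) (ys t) \<noteq> 0 \<and>
                  b t = f_upd T Obs (zs t) (b (t - 1)) (ys t))"

lemma sos_fun_nonneg: "sos_fun q \<Longrightarrow> 0 \<le> q x"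
  unfolding sos_fun_def by (auto intro!: sum_list_nonneg)

lemma learning_pomdp_nonneg:
  assumes "learning_pomdp p0 T Obs"
  shows "0 \<le> p0 h" "0 \<le> T h z h'" "0 \<le> Obs y h' z"
  using assms unfolding learning_pomdp_def belief_simplex_def by auto

context
  fixes T :: "'h::finite \<Rightarrow> 'z \<Rightarrow> 'h \<Rightarrow> real" and Obs :: "'y \<Rightarrow> 'h \<Rightarrow> 'z \<Rightarrow> real"
  assumes T_nonneg: "\<And>h z h'. 0 \<le> T h z h'"
    and Obs_nonneg: "\<And>y h' z. 0 \<le> Obs y h' z"
begin

lemma S_upd_nonneg: "(\<And>h. 0 \<le> x h) \<Longrightarrow> 0 \<le> S_upd T Obs z x y h'"
  unfolding S_upd_def using T_nonneg Obs_nonneg by (auto intro!: sum_nonneg mult_nonneg_nonneg)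

lemma R_upd_nonneg: "(\<And>h. 0 \<le> x h) \<Longrightarrow> 0 \<le> R_upd T Obs z x y"
  unfolding R_upd_def using T_nonneg Obs_nonneg by (auto intro!: sum_nonneg mult_nonneg_nonneg)

lemma f_upd_nonneg: "(\<And>h. 0 \<le> x h) \<Longrightarrow> 0 \<le> f_upd T Obs z x y h'"
  unfolding f_upd_def by (simp add: S_upd_nonneg R_upd_nonneg)

lemma belief_trajectory_nonneg:
  assumes "belief_trajectory T Obs p0 zs ys n b" "\<And>h. 0 \<le> p0 h" "t \<le> n"
  shows "0 \<le> b t h"
  using \<open>t \<le> n\<close>
proof (induction t arbitrary: h)
  case 0
  then show ?case using assms(1,2) by (simp add: belief_trajectory_def)
next
  case (Suc t)
  then have "Suc t \<in> {1..n}" by simp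
  then have "b (Suc t) = f_upd T Obs (zs (Suc t)) (b t) (ys (Suc t))"
    using assms(1) unfolding belief_trajectory_def by fastforce
  with Suc show ?case by (simp add: f_upd_nonneg)
qed

lemma barrier_nonincreasing_along_update:
  fixes B :: "real \<Rightarrow> ('h \<Rightarrow> real) \<Rightarrow> real"
  assumes q_sos: "sos_fun q"
    and q_eq: "\<forall>x. R_upd T Obs z x y \<noteq> 0 \<longrightarrow>
           q (\<lambda>v. case v of None \<Rightarrow> t | Some h \<Rightarrow> x h) =
           - ((R_upd T Obs z x y) ^ d) * (B t (f_upd T Obs z x y) - B (t - 1) x)"
    and x_nonneg: "\<And>h. 0 \<le> x h"
    and R_nz: "R_upd T Obs z x y \<noteq> 0"
  shows "B t (f_upd T Obs z x y) \<le> B (t - 1) x"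
proof -
  have "0 < R_upd T Obs z x y ^ d"
    using R_nz R_upd_nonneg[where x = x and z = z and y = y, OF x_nonneg] by simp
  moreover have "0 \<le> - (R_upd T Obs z x y ^ d) * (B t (f_upd T Obs z x y) - B (t - 1) x)"
    using q_eq R_nz sos_fun_nonneg[OF q_sos] by metis
  ultimately show ?thesis by (simp add: mult_le_0_iff)
qed

end

lemma nonincreasing_upto_le_start:
  fixes g :: "nat \<Rightarrow> 'a::preorder"
  assumes "\<And>t. t \<in> {1..n} \<Longrightarrow> g t \<le> g (t - 1)" "t \<le> n"
  shows "g t \<le> g 0"
  using assms(2)
proof (induction t)
  case (Suc t)
  then show ?case using assms(1)[of "Suc t"] order_trans by auto
qed simp

lemma sos_certificate_lower_bound:
  fixes x :: "'h::finite \<Rightarrow> real"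
  assumes "sos_fun pf" "sos_fun (\<lambda>x. B x + pf x * (x hstar - lam) - s1)"
    and "0 < s1" "B x \<le> 0"
  shows "lam \<le> x hstar"
proof (rule ccontr)
  assume "\<not> lam \<le> x hstar"
  then have "pf x * (x hstar - lam) \<le> 0"
    using sos_fun_nonneg[OF assms(1)] by (simp add: mult_nonneg_nonpos)
  moreover have "0 \<le> B x + pf x * (x hstar - lam) - s1"
    using sos_fun_nonneg[OF assms(2)] .
  ultimately show False using assms(3,4) by linarith
qed

theorem corollary1:
  fixes p0 :: "'h::finite \<Rightarrow> real"
    and T :: "'h \<Rightarrow> 'z::finite \<Rightarrow> 'h \<Rightarrow> real"
    and Obs :: "'y::finite \<Rightarrow> 'h \<Rightarrow> 'z \<Rightarrow> real"
    and hstar :: 'h and lam :: real and tstar :: nat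
    and B :: "real \<Rightarrow> ('h \<Rightarrow> real) \<Rightarrow> real" and d :: nat
    and pf :: "('h \<Rightarrow> real) \<Rightarrow> real" and s1 s2 :: real
    and b :: "nat \<Rightarrow> 'h \<Rightarrow> real" and zs :: "nat \<Rightarrow> 'z" and ys :: "nat \<Rightarrow> 'y"
  assumes pomdp: "learning_pomdp p0 T Obs"
    and lam: "0 < lam" "lam \<le> 1"
    and tstar: "1 \<le> tstar"
    and B_deg: "poly_fun_degree (tb_fun B) d"
    and pf_sos: "sos_fun pf"
    and s_pos: "0 < s1" "0 < s2"
    and cond_i: "sos_fun (\<lambda>x. B (real tstar) x + pf x * (x hstar - lam) - s1)"
    and cond_ii: "- B 0 p0 - s2 > 0"
    and cond_iii: "\<forall>t\<in>{1..tstar}. \<forall>y z. \<exists>q. sos_fun q \<and>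
        (\<forall>x. R_upd T Obs z x y \<noteq> 0 \<longrightarrow>
           q (\<lambda>v. case v of None \<Rightarrow> real t | Some h \<Rightarrow> x h) =
           - ((R_upd T Obs z x y) ^ d) *
               (B (real t) (f_upd T Obs z x y) - B (real t - 1) x))"
    and traj0: "b 0 = p0"
    and traj: "\<forall>t\<in>{1..tstar}. R_upd T Obs (zs t) (b (t - 1)) (ys t) \<noteq> 0 \<and>
                 b t = f_upd T Obs (zs t) (b (t - 1)) (ys t)"
  shows "b tstar \<notin> fail_set hstar lam \<and> lam \<le> b tstar hstar"
proof -
  note nonneg = learning_pomdp_nonneg[OF pomdp]
  have trajectory: "belief_trajectory T Obs p0 zs ys tstar b"
    unfolding belief_trajectory_def using traj0 traj by blast
  have step: "B (real t) (b t) \<le> B (real (t - 1)) (b (t - 1))" if "t \<in> {1..tstar}" for t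
  proof -
    have prev_nonneg: "\<And>h. 0 \<le> b (t - 1) h"
      using belief_trajectory_nonneg[OF nonneg(2,3) trajectory nonneg(1), of "t - 1"] that by auto
    have R_nz: "R_upd T Obs (zs t) (b (t - 1)) (ys t) \<noteq> 0"
      and b_t: "b t = f_upd T Obs (zs t) (b (t - 1)) (ys t)"
      using traj that by blast+
    have "B (real t) (f_upd T Obs (zs t) (b (t - 1)) (ys t)) \<le> B (real t - 1) (b (t - 1))"
      using cond_iii that
        barrier_nonincreasing_along_update[OF nonneg(2,3) _ _ prev_nonneg R_nz]
      by blast
    then show ?thesis using b_t that by (simp add: of_nat_diff)
  qed
  have "B (real tstar) (b tstar) \<le> B 0 p0"
    using nonincreasing_upto_le_start[where g = "\<lambda>t. B (real t) (b t)" and n = tstar, OF step]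
      traj0 by simp
  then have "lam \<le> b tstar hstar"
    using sos_certificate_lower_bound[OF pf_sos cond_i] s_pos cond_ii by simp
  then show ?thesis by (simp add: fail_set_def)
qed

end
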